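(* Let $n\ge2$, $d\ge1$, $\alpha\in(0,1)$ and let $\boldsymbol\sigma=(\sigma_1,\dots,\sigma_n)$ be arbitrary positive noise levels (heteroscedastic model, with $\sigma_i^\#=\sigma_{\pi^*(i)}$). If $\hat\pi$ is either $\pi^{\mathrm{LSNS}}$ (computed with the known noise levels) or $\pi^{\mathrm{LSL}}$, then $$\bar\kappa_\alpha(\hat\pi)\le 4\max\Big\{\Big(2\log\frac{8n^2}{\alpha}\Big)^{1/2},\ \Big(d\log\frac{4n^2}{\alpha}\Big)^{1/4}\Big\}.$$
   Context: Model: integers $n\ge2$, $d\ge1$. Unknown parameters: $\boldsymbol\theta=(\theta_1,\dots,\theta_n)$ with $\theta_i\in\mathbb R^d$, noise levels $\boldsymbol\sigma=(\sigma_1,\dots,\sigma_n)$ with $\sigma_i>0$, and a permutation $\pi^*\in\mathfrak S_n$ (the symmetric group on $\{1,\dots,n\}$). One observes $X_i=\theta_i+\sigma_i\xi_i$, $X_i^\#=\theta_{\pi^*(i)}+\sigma_i^\#\xi_i^\#$, $i=1,\dots,n$, where $\sigma_i^\#=\sigma_{\pi^*(i)}$ and $\xi_1,\dots,\xi_n,\xi_1^\#,\dots,\xi_n^\#$ are i.i.d. $\mathcal N(0,I_d)$. The law of the data is $\mathbf P_{\boldsymbol\theta,\boldsymbol\sigma,\pi^*}$. Ties in argmins are broken arbitrarily (measurably). Estimators: $\pi^{\mathrm{LSNS}}=\arg\min_{\pi\in\mathfrak S_n}\sum_{i=1}^n\frac{\|X_{\pi(i)}-X_i^\#\|^2}{\sigma_{\pi(i)}^2+(\sigma_i^\#)^2}$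 and $\pi^{\mathrm{LSL}}=\arg\min_{\pi\in\mathfrak S_n}\sum_{i=1}^n\log\|X_{\pi(i)}-X_i^\#\|^2$. Relative separation distance: $\bar\kappa(\boldsymbol\theta,\boldsymbol\sigma)=\min_{i\ne j}\frac{\|\theta_i-\theta_j\|}{(\sigma_i^2+\sigma_j^2)^{1/2}}$. Perceivable separation distance of an estimator $\hat\pi$: $\bar\kappa_\alpha(\hat\pi)=\inf\{\kappa>0:\ \max_{\pi\in\mathfrak S_n}\sup_{\boldsymbol\theta:\,\bar\kappa(\boldsymbol\theta,\boldsymbol\sigma)>\kappa}\mathbf P_{\boldsymbol\theta,\boldsymbol\sigma,\pi}(\hat\pi\ne\pi)\le\alpha\}$. *)

theory Defs
  imports "HOL-Probability.Probability"
begin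

text \<open>Vectors in R^d are represented as functions 'd => real over a finite index
type 'd (so d = CARD('d) >= 1); the n points are indexed by a finite type 'n.
An observation is the pair (X, X#).\<close>

type_synonym ('n, 'd) obs = "('n \<Rightarrow> 'd \<Rightarrow> real) \<times> ('n \<Rightarrow> 'd \<Rightarrow> real)"

definition sqdist :: "('d::finite \<Rightarrow> real) \<Rightarrow> ('d \<Rightarrow> real) \<Rightarrow> real" where
  "sqdist x y = (\<Sum>k\<in>UNIV. (x k - y k)^2)"

definition eucl_norm :: "('d::finite \<Rightarrow> real) \<Rightarrow> real" where
  "eucl_norm x = sqrt (\<Sum>k\<in>UNIV. (x k)^2)"

definition obs_space :: "('n::finite, 'd::finite) obs measure" where
  "obs_space = (PiM UNIV (\<lambda>i. PiM UNIV (\<lambda>k. borel))) \<Otimes>\<^sub>M (PiM UNIV (\<lambda>i. PiM UNIV (\<lambda>k. borel)))"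

text \<open>Law P_{theta,sigma,pi*} of the data: X_i = theta_i + sigma_i xi_i and
X#_i = theta_{pi*(i)} + sigma_{pi*(i)} xi#_i with all xi, xi# i.i.d. N(0, I_d);
i.e. all coordinates are independent Gaussians.\<close>
definition data_law ::
  "('n::finite \<Rightarrow> 'd::finite \<Rightarrow> real) \<Rightarrow> ('n \<Rightarrow> real) \<Rightarrow> ('n \<Rightarrow> 'n) \<Rightarrow> ('n, 'd) obs measure" where
  "data_law \<theta> \<sigma> \<pi> =
     (PiM UNIV (\<lambda>i. PiM UNIV (\<lambda>k. density lborel (normal_density (\<theta> i k) (\<sigma> i)))))
     \<Otimes>\<^sub>M
     (PiM UNIV (\<lambda>i. PiM UNIV (\<lambda>k. density lborel (normal_density (\<theta> (\<pi> i) k) (\<sigma> (\<pi> i))))))"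

definition rel_sep :: "('n::finite \<Rightarrow> 'd::finite \<Rightarrow> real) \<Rightarrow> ('n \<Rightarrow> real) \<Rightarrow> real" where
  "rel_sep \<theta> \<sigma> = Min {eucl_norm (\<lambda>k. \<theta> i k - \<theta> j k) / sqrt ((\<sigma> i)^2 + (\<sigma> j)^2) | i j. i \<noteq> j}"

definition crit_LSNS ::
  "('n::finite \<Rightarrow> real) \<Rightarrow> ('n \<Rightarrow> real) \<Rightarrow> ('n, 'd::finite) obs \<Rightarrow> ('n \<Rightarrow> 'n) \<Rightarrow> real" where
  "crit_LSNS \<sigma> \<sigma>s \<omega> \<tau> =
     (\<Sum>i\<in>UNIV. sqdist (fst \<omega> (\<tau> i)) (snd \<omega> i) / ((\<sigma> (\<tau> i))^2 + (\<sigma>s i)^2))"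

definition crit_LSL :: "('n::finite, 'd::finite) obs \<Rightarrow> ('n \<Rightarrow> 'n) \<Rightarrow> real" where
  "crit_LSL \<omega> \<tau> = (\<Sum>i\<in>UNIV. ln (sqdist (fst \<omega> (\<tau> i)) (snd \<omega> i)))"

text \<open>An estimator is a map est, where est sigma# omega is the estimated permutation
computed from the data omega and the (known) noise levels sigma# of the second sample.\<close>
definition is_LSNS :: "('n::finite \<Rightarrow> real) \<Rightarrow> (('n \<Rightarrow> real) \<Rightarrow> ('n, 'd::finite) obs \<Rightarrow> 'n \<Rightarrow> 'n) \<Rightarrow> bool" where
  "is_LSNS \<sigma> est \<longleftrightarrow> (\<forall>\<pi>. \<pi> permutes UNIV \<longrightarrow> (\<forall>\<omega>.
     est (\<sigma> \<circ> \<pi>) \<omega> permutes UNIV \<and>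
     (\<forall>\<tau>. \<tau> permutes UNIV \<longrightarrow>
        crit_LSNS \<sigma> (\<sigma> \<circ> \<pi>) \<omega> (est (\<sigma> \<circ> \<pi>) \<omega>) \<le> crit_LSNS \<sigma> (\<sigma> \<circ> \<pi>) \<omega> \<tau>)))"

definition is_LSL :: "('n::finite \<Rightarrow> real) \<Rightarrow> (('n \<Rightarrow> real) \<Rightarrow> ('n, 'd::finite) obs \<Rightarrow> 'n \<Rightarrow> 'n) \<Rightarrow> bool" where
  "is_LSL \<sigma> est \<longleftrightarrow> (\<forall>\<pi>. \<pi> permutes UNIV \<longrightarrow> (\<forall>\<omega>.
     est (\<sigma> \<circ> \<pi>) \<omega> permutes UNIV \<and>
     (\<forall>\<tau>. \<tau> permutes UNIV \<longrightarrow> crit_LSL \<omega> (est (\<sigma> \<circ> \<pi>) \<omega>) \<le> crit_LSL \<omega> \<tau>)))"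

text \<open>Perceivable separation distance kappa-bar_alpha(est), as an extended real
(infimum of the empty set is +infinity).\<close>
definition perceivable_sep ::
  "real \<Rightarrow> ('n::finite \<Rightarrow> real) \<Rightarrow> (('n \<Rightarrow> real) \<Rightarrow> ('n, 'd::finite) obs \<Rightarrow> 'n \<Rightarrow> 'n) \<Rightarrow> ereal" where
  "perceivable_sep \<alpha> \<sigma> est =
     (INF \<kappa> \<in> {\<kappa>. \<kappa> > 0 \<and>
        (\<forall>\<pi> (\<theta>::'n \<Rightarrow> 'd \<Rightarrow> real). \<pi> permutes UNIV \<longrightarrow> rel_sep \<theta> \<sigma> > \<kappa> \<longrightarrow>
           measure (data_law \<theta> \<sigma> \<pi>) {\<omega> \<in> space (data_law \<theta> \<sigma> \<pi>). est (\<sigma> \<circ> \<pi>) \<omega> \<noteq> \<pi>} \<le> \<alpha>)}.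
      ereal \<kappa>)"

end

theory Submission
  imports Defs
begin

text \<open>Write D(a,i) = |X_a - X#_i|^2 / (\<sigma>_a^2 + \<sigma>_\<pi>(i)^2). For a matched pair a = \<pi>(i)
  this is a \<chi>^2_d variable; for a mismatched pair it is \<chi>^2_d + 2<g,\<xi>> + |g|^2 with a
  standard Gaussian vector \<xi> and |g| \<ge> \<kappa>, the relative separation. Chernoff bounds of
  Laurent-Massart type show that, outside an event of probability 2 n^2 e^(-L) with
  L = ln (2 n^2 / \<alpha>), every matched pair has 0 < D \<le> d + 2\<surd>(dL) + 2L while every
  mismatched pair lies above this threshold, provided \<kappa> exceeds the stated bound. On that
  event the true permutation is the unique minimiser of the LSNS criterion, a sum of D's, and
  also of the LSL criterion: \<sigma>_a^2 + \<sigma>_b^2 \<ge> 2 \<sigma>_a \<sigma>_b turns the threshold into a bound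
  on ln |X_a - X#_i|^2 up to terms ln \<sigma>_\<tau>(i) - ln \<sigma>_\<pi>(i), which cancel when summed over
  a permutation.\<close>

section \<open>Gaussian measures on the line\<close>

definition gaussian :: "real \<Rightarrow> real \<Rightarrow> real measure" where
  "gaussian m s = density lborel (normal_density m s)"

lemma prob_space_gaussian: "s > 0 \<Longrightarrow> prob_space (gaussian m s)"
  unfolding gaussian_def by (rule prob_space_normal_density)

lemma sets_gaussian[simp, measurable_cong]: "sets (gaussian m s) = sets borel"
  by (simp add: gaussian_def)

lemma nn_integral_normal_density: "s > 0 \<Longrightarrow> (\<integral>\<^sup>+w. normal_density m s w \<partial>lborel) = 1"
  using prob_space.emeasure_space_1[OF prob_space_gaussian[of s m]]
  by (simp add: gaussian_def emeasure_density)

lemma nn_integral_normal_density_times: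
  assumes s': "s' > 0" and C: "C \<ge> 0" and f: "\<And>w. f w \<ge> 0"
    and eq: "\<And>w. normal_density m s w * f w = C * normal_density m' s' w"
  shows "(\<integral>\<^sup>+w. normal_density m s w * ennreal (f w) \<partial>lborel) = C"
proof -
  have "(\<integral>\<^sup>+w. normal_density m s w * ennreal (f w) \<partial>lborel)
      = (\<integral>\<^sup>+w. C * ennreal (normal_density m' s' w) \<partial>lborel)"
    by (intro nn_integral_cong) (simp add: ennreal_mult[symmetric] f C eq)
  also have "\<dots> = C"
    by (simp add: nn_integral_cmult nn_integral_normal_density[OF s'])
  finally show ?thesis .
qed

lemma nn_integral_normal_exp_square:
  assumes s: "s > 0" and c: "c < 1/2"
  shows "(\<integral>\<^sup>+w. normal_density m s w * ennreal (exp (c * ((w - m) / s)\<^sup>2)) \<partial>lborel)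
       = 1 / sqrt (1 - 2 * c)"
proof (rule nn_integral_normal_density_times)
  define q where "q = 1 - 2 * c"
  have q: "q > 0" using c by (simp add: q_def)
  show "s / sqrt (1 - 2 * c) > 0" using s q by (simp add: q_def)
  fix w
  have sq: "(s / sqrt q)\<^sup>2 = s\<^sup>2 / q" using q by (simp add: power_divide)
  have e: "exp (-(w - m)\<^sup>2 / (2 * s\<^sup>2)) * exp (c * ((w - m) / s)\<^sup>2)
      = exp (-(w - m)\<^sup>2 / (2 * (s / sqrt q)\<^sup>2))"
    unfolding exp_add[symmetric] sq using s q by (simp add: q_def field_simps power_divide)
  have r: "1 / sqrt (2 * pi * s\<^sup>2) = 1 / sqrt q * (1 / sqrt (2 * pi * (s / sqrt q)\<^sup>2))"
    unfolding sq using q s by (simp add: real_sqrt_divide real_sqrt_mult)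
  show "normal_density m s w * exp (c * ((w - m) / s)\<^sup>2)
      = 1 / sqrt (1 - 2 * c) * normal_density m (s / sqrt (1 - 2 * c)) w"
    unfolding normal_density_def q_def[symmetric] r mult.assoc[symmetric]
    unfolding mult.assoc e[symmetric] by simp
qed (use c in simp_all)

lemma nn_integral_normal_exp_linear:
  assumes s: "s > 0"
  shows "(\<integral>\<^sup>+w. normal_density m s w * ennreal (exp (t * ((w - m) / s))) \<partial>lborel) = exp (t\<^sup>2 / 2)"
proof (rule nn_integral_normal_density_times)
  fix w
  have "-(w - m)\<^sup>2 / (2 * s\<^sup>2) + t * ((w - m) / s) = t\<^sup>2 / 2 + -(w - (m + t * s))\<^sup>2 / (2 * s\<^sup>2)"
    using s by (simp add: field_simps power2_eq_square)
  then have e: "exp (-(w - m)\<^sup>2 / (2 * s\<^sup>2)) * exp (t * ((w - m) / s))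
      = exp (t\<^sup>2 / 2) * exp (-(w - (m + t * s))\<^sup>2 / (2 * s\<^sup>2))"
    by (simp only: exp_add[symmetric])
  show "normal_density m s w * exp (t * ((w - m) / s)) = exp (t\<^sup>2 / 2) * normal_density (m + t * s) s w"
    unfolding normal_density_def mult.assoc e by (simp only: mult.left_commute)
qed (use s in simp_all)

lemma nn_integral_normal_indicator_singleton:
  "(\<integral>\<^sup>+w. ennreal (normal_density m s w) * indicator {x} w \<partial>lborel) = 0"
proof -
  have "AE w in lborel. ennreal (normal_density m s w) * indicator {x} w = 0"
    using AE_lborel_singleton[of x] by eventually_elim simp
  then show ?thesis by (subst nn_integral_0_iff_AE) auto
qed

lemma distr_sets_cong: "sets N = sets N' \<Longrightarrow> distr M N f = distr M N' f"
  unfolding distr_def using sets_eq_imp_space_eq by metis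

lemma (in pair_prob_space) distr_pair_snd: "distr (M1 \<Otimes>\<^sub>M M2) M2 snd = M2"
proof -
  have "distr (M1 \<Otimes>\<^sub>M M2) M2 snd = distr (M2 \<Otimes>\<^sub>M M1) M2 (snd \<circ> (\<lambda>(x, y). (y, x)))"
    by (subst distr_pair_swap) (rule distr_distr, auto)
  also have "snd \<circ> (\<lambda>(x, y). (y, x)) = fst" by auto
  finally show ?thesis by (simp add: M1.distr_pair_fst)
qed

lemma pair_prob_space_gaussian:
  "s1 > 0 \<Longrightarrow> s2 > 0 \<Longrightarrow> pair_prob_space (gaussian m1 s1) (gaussian m2 s2)"
  by (simp add: pair_prob_space_def pair_sigma_finite_def prob_space_gaussian prob_space_imp_sigma_finite)

lemma gaussian_pair_components:
  fixes m1 m2 :: real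
  assumes s1: "s1 > 0" and s2: "s2 > 0"
  defines "P \<equiv> gaussian m1 s1 \<Otimes>\<^sub>M gaussian m2 s2"
  shows "distributed P lborel fst (normal_density m1 s1)"
    and "distributed P lborel snd (normal_density m2 s2)"
    and "prob_space.indep_var P borel fst borel snd"
proof -
  interpret pair_prob_space "gaussian m1 s1" "gaussian m2 s2"
    using s1 s2 by (rule pair_prob_space_gaussian)
  have sets: "sets P = sets (borel \<Otimes>\<^sub>M borel)"
    unfolding P_def by (rule sets_pair_measure_cong) simp_all
  have "distr P N fst = gaussian m1 s1" if "sets N = sets borel" for N :: "real measure"
    using distr_sets_cong[of N "gaussian m1 s1" P fst] M2.distr_pair_fst that by (simp add: P_def)
  moreover have "distr P N snd = gaussian m2 s2" if "sets N = sets borel" for N :: "real measure"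
    using distr_sets_cong[of N "gaussian m2 s2" P snd] distr_pair_snd that by (simp add: P_def)
  moreover have "fst \<in> P \<rightarrow>\<^sub>M borel" "snd \<in> P \<rightarrow>\<^sub>M borel"
    by (simp_all add: measurable_cong_sets[OF sets refl])
  moreover have "distr P (borel \<Otimes>\<^sub>M borel) (\<lambda>x. (fst x, snd x)) = P"
    using distr_sets_cong[OF sets[symmetric], of P "\<lambda>x. x"] by simp
  ultimately show "distributed P lborel fst (normal_density m1 s1)"
      "distributed P lborel snd (normal_density m2 s2)"
      "prob_space.indep_var P borel fst borel snd"
    unfolding P_def indep_var_distribution_eq
    by (auto simp: distributed_def measurable_lborel1 gaussian_def simp flip: P_def)
qed

lemma nn_integral_gaussian_diff:
  fixes g :: "real \<Rightarrow> ennreal"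
  assumes s1: "s1 > 0" and s2: "s2 > 0" and g[measurable]: "g \<in> borel_measurable borel"
  shows "(\<integral>\<^sup>+u. \<integral>\<^sup>+v. g (u - v) \<partial>gaussian m2 s2 \<partial>gaussian m1 s1)
       = (\<integral>\<^sup>+w. normal_density (m1 - m2) (sqrt (s1\<^sup>2 + s2\<^sup>2)) w * g w \<partial>lborel)"
proof -
  interpret pair_prob_space "gaussian m1 s1" "gaussian m2 s2"
    using s1 s2 by (rule pair_prob_space_gaussian)
  have sets: "sets (gaussian m1 s1 \<Otimes>\<^sub>M gaussian m2 s2) = sets (borel \<Otimes>\<^sub>M borel)"
    by (rule sets_pair_measure_cong) simp_all
  note components = gaussian_pair_components[OF s1 s2, of m1 m2]
  have diff: "distributed (gaussian m1 s1 \<Otimes>\<^sub>M gaussian m2 s2) lborel (\<lambda>x. fst x - snd x)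
      (normal_density (m1 - m2) (sqrt (s1\<^sup>2 + s2\<^sup>2)))"
    by (rule diff_indep_normal[OF components(3) s1 s2 components(1,2)])
  have "(\<lambda>p. g (fst p - snd p)) \<in> borel_measurable (gaussian m1 s1 \<Otimes>\<^sub>M gaussian m2 s2)"
    unfolding measurable_cong_sets[OF sets refl] by measurable
  then have "(\<integral>\<^sup>+u. \<integral>\<^sup>+v. g (u - v) \<partial>gaussian m2 s2 \<partial>gaussian m1 s1)
      = (\<integral>\<^sup>+p. g (fst p - snd p) \<partial>gaussian m1 s1 \<Otimes>\<^sub>M gaussian m2 s2)"
    using M2.nn_integral_fst[of "\<lambda>p. g (fst p - snd p)"] by simp
  also have "\<dots> = (\<integral>\<^sup>+w. normal_density (m1 - m2) (sqrt (s1\<^sup>2 + s2\<^sup>2)) w * g w \<partial>lborel)"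
    by (rule distributed_nn_integral[OF diff, symmetric]) simp
  finally show ?thesis .
qed

section \<open>The law of the observations\<close>

lemma nn_integral_PiM_component:
  assumes "\<And>j. j \<in> I \<Longrightarrow> prob_space (M j)" "i \<in> I" "f \<in> borel_measurable (M i)"
  shows "(\<integral>\<^sup>+x. f (x i) \<partial>PiM I M) = (\<integral>\<^sup>+z. f z \<partial>M i)"
proof -
  have "(\<integral>\<^sup>+x. f (x i) \<partial>PiM I M) = (\<integral>\<^sup>+z. f z \<partial>distr (PiM I M) (M i) (\<lambda>x. x i))"
    using assms by (intro nn_integral_distr[symmetric] measurable_component_singleton) auto
  also have "\<dots> = (\<integral>\<^sup>+z. f z \<partial>M i)"
    using assms by (simp add: distr_PiM_component)
  finally show ?thesis .
qed

lemma nn_integral_PiM_PiM_prod: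
  fixes N :: "'n::finite \<Rightarrow> 'd::finite \<Rightarrow> real measure" and h :: "'d \<Rightarrow> real \<Rightarrow> ennreal"
  assumes prob: "\<And>j k. prob_space (N j k)" and sets: "\<And>j k. sets (N j k) = sets borel"
    and h: "\<And>k. h k \<in> borel_measurable borel"
  shows "(\<integral>\<^sup>+y. (\<Prod>k\<in>UNIV. h k (y i k)) \<partial>PiM UNIV (\<lambda>j. PiM UNIV (N j)))
       = (\<Prod>k\<in>UNIV. \<integral>\<^sup>+v. h k v \<partial>N i k)"
proof -
  interpret product_sigma_finite "N i"
    by (simp add: product_sigma_finite_def prob prob_space_imp_sigma_finite)
  have h': "h k \<in> borel_measurable (N i k)" for k
    using h[of k] by (simp add: measurable_cong_sets[OF sets refl])
  have "(\<integral>\<^sup>+y. (\<Prod>k\<in>UNIV. h k (y i k)) \<partial>PiM UNIV (\<lambda>j. PiM UNIV (N j)))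
      = (\<integral>\<^sup>+z. (\<Prod>k\<in>UNIV. h k (z k)) \<partial>PiM UNIV (N i))"
    using h' by (intro nn_integral_PiM_component[where f = "\<lambda>z. \<Prod>k\<in>UNIV. h k (z k)"]
        prob_space_PiM prob) (auto intro!: borel_measurable_prod_ennreal
          measurable_compose[OF measurable_component_singleton])
  also have "\<dots> = (\<Prod>k\<in>UNIV. \<integral>\<^sup>+v. h k v \<partial>N i k)"
    using h' by (intro product_nn_integral_prod) auto
  finally show ?thesis .
qed

lemma data_law_gaussian:
  "data_law \<theta> \<sigma> \<pi> = PiM UNIV (\<lambda>j. PiM UNIV (\<lambda>k. gaussian (\<theta> j k) (\<sigma> j))) \<Otimes>\<^sub>M
                        PiM UNIV (\<lambda>j. PiM UNIV (\<lambda>k. gaussian (\<theta> (\<pi> j) k) (\<sigma> (\<pi> j))))"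
  unfolding data_law_def gaussian_def ..

lemma sets_data_law: "sets (data_law \<theta> \<sigma> \<pi>) = sets obs_space"
  unfolding data_law_gaussian obs_space_def
  by (intro sets_pair_measure_cong sets_PiM_cong) simp_all

lemma space_data_law: "space (data_law \<theta> \<sigma> \<pi>) = space obs_space"
  by (rule sets_eq_imp_space_eq[OF sets_data_law])

lemma prob_space_data_law: "(\<And>i. \<sigma> i > 0) \<Longrightarrow> prob_space (data_law \<theta> \<sigma> \<pi>)"
  unfolding data_law_gaussian
  by (intro prob_space_pair prob_space_PiM prob_space_gaussian)

lemma measurable_coordinate_PiM_PiM:
  "(\<lambda>x. x a k) \<in> PiM UNIV (\<lambda>i. PiM UNIV (\<lambda>k. M)) \<rightarrow>\<^sub>M M"
  by (rule measurable_compose[where f = "\<lambda>x. x a" and g = "\<lambda>x. x k"];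
      rule measurable_component_singleton) simp_all

lemma measurable_fst_coordinate[measurable]:
  "(\<lambda>x. fst x a k) \<in> PiM UNIV (\<lambda>i. PiM UNIV (\<lambda>k. M)) \<Otimes>\<^sub>M N \<rightarrow>\<^sub>M M"
  by (rule measurable_compose[OF measurable_fst measurable_coordinate_PiM_PiM])

lemma measurable_snd_coordinate[measurable]:
  "(\<lambda>x. snd x a k) \<in> N \<Otimes>\<^sub>M PiM UNIV (\<lambda>i. PiM UNIV (\<lambda>k. M)) \<rightarrow>\<^sub>M M"
  by (rule measurable_compose[OF measurable_snd measurable_coordinate_PiM_PiM])

lemma nn_integral_data_law_diff_prod:
  fixes \<theta> :: "'n::finite \<Rightarrow> 'd::finite \<Rightarrow> real" and g :: "'d \<Rightarrow> real \<Rightarrow> ennreal"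
  assumes \<sigma>: "\<And>i. \<sigma> i > 0" and g[measurable]: "\<And>k. g k \<in> borel_measurable borel"
  shows "(\<integral>\<^sup>+\<omega>. (\<Prod>k\<in>UNIV. g k (fst \<omega> a k - snd \<omega> i k)) \<partial>data_law \<theta> \<sigma> \<pi>)
       = (\<Prod>k\<in>UNIV. \<integral>\<^sup>+w. normal_density (\<theta> a k - \<theta> (\<pi> i) k) (sqrt ((\<sigma> a)\<^sup>2 + (\<sigma> (\<pi> i))\<^sup>2)) w
                            * g k w \<partial>lborel)"
proof -
  let ?N1 = "\<lambda>j k. gaussian (\<theta> j k) (\<sigma> j)" and ?N2 = "\<lambda>j k. gaussian (\<theta> (\<pi> j) k) (\<sigma> (\<pi> j))"
  let ?B = "PiM UNIV (\<lambda>i::'n. PiM UNIV (\<lambda>k::'d. borel :: real measure))"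
  interpret D2: prob_space "PiM UNIV (\<lambda>j. PiM UNIV (?N2 j))"
    by (intro prob_space_PiM prob_space_gaussian \<sigma>)
  have sets: "sets (PiM UNIV (\<lambda>j. PiM UNIV (?N1 j)) \<Otimes>\<^sub>M PiM UNIV (\<lambda>j. PiM UNIV (?N2 j)))
      = sets (?B \<Otimes>\<^sub>M ?B)"
    by (intro sets_pair_measure_cong sets_PiM_cong) simp_all
  have inner_measurable: "(\<lambda>u. \<integral>\<^sup>+v. g k (u - v) \<partial>?N2 i k) \<in> borel_measurable borel" for k
  proof -
    interpret prob_space "?N2 i k" by (intro prob_space_gaussian \<sigma>)
    have "(\<lambda>(u, v). g k (u - v)) \<in> borel_measurable (borel \<Otimes>\<^sub>M ?N2 i k)"
      by (simp add: measurable_cong_sets[OF sets_pair_measure_cong[OF refl sets_gaussian] refl])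
    then show ?thesis by (rule borel_measurable_nn_integral)
  qed
  have "(\<integral>\<^sup>+\<omega>. (\<Prod>k\<in>UNIV. g k (fst \<omega> a k - snd \<omega> i k)) \<partial>data_law \<theta> \<sigma> \<pi>)
      = (\<integral>\<^sup>+x. \<integral>\<^sup>+y. (\<Prod>k\<in>UNIV. g k (x a k - y i k)) \<partial>PiM UNIV (\<lambda>j. PiM UNIV (?N2 j))
            \<partial>PiM UNIV (\<lambda>j. PiM UNIV (?N1 j)))"
  proof -
    have meas: "(\<lambda>\<omega>. \<Prod>k\<in>UNIV. g k (fst \<omega> a k - snd \<omega> i k))
        \<in> borel_measurable (PiM UNIV (\<lambda>j. PiM UNIV (?N1 j)) \<Otimes>\<^sub>M PiM UNIV (\<lambda>j. PiM UNIV (?N2 j)))"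
      unfolding measurable_cong_sets[OF sets refl] by measurable
    show ?thesis
      unfolding data_law_gaussian using D2.nn_integral_fst[OF meas] by simp
  qed
  also have "\<dots> = (\<integral>\<^sup>+x. (\<Prod>k\<in>UNIV. \<integral>\<^sup>+v. g k (x a k - v) \<partial>?N2 i k)
                     \<partial>PiM UNIV (\<lambda>j. PiM UNIV (?N1 j)))"
    by (intro nn_integral_cong nn_integral_PiM_PiM_prod prob_space_gaussian \<sigma>) simp_all
  also have "\<dots> = (\<Prod>k\<in>UNIV. \<integral>\<^sup>+u. \<integral>\<^sup>+v. g k (u - v) \<partial>?N2 i k \<partial>?N1 a k)"
    by (intro nn_integral_PiM_PiM_prod prob_space_gaussian \<sigma> inner_measurable) simp
  also have "\<dots> = (\<Prod>k\<in>UNIV. \<integral>\<^sup>+w. normal_density (\<theta> a k - \<theta> (\<pi> i) k)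
                     (sqrt ((\<sigma> a)\<^sup>2 + (\<sigma> (\<pi> i))\<^sup>2)) w * g k w \<partial>lborel)"
    by (intro prod.cong refl nn_integral_gaussian_diff \<sigma> g)
  finally show ?thesis .
qed

section \<open>Standardised residuals\<close>

definition noise_scale :: "('n \<Rightarrow> real) \<Rightarrow> ('n \<Rightarrow> 'n) \<Rightarrow> 'n \<Rightarrow> 'n \<Rightarrow> real" where
  "noise_scale \<sigma> \<pi> a i = sqrt ((\<sigma> a)\<^sup>2 + (\<sigma> (\<pi> i))\<^sup>2)"

text \<open>Under \<open>data_law \<theta> \<sigma> \<pi>\<close> the coordinates of \<open>std_residual \<theta> \<sigma> \<pi> a i\<close> are
  independent standard normal variables, for matched (\<open>a = \<pi> i\<close>) and mismatched pairs alike.\<close>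

definition std_residual ::
  "('n \<Rightarrow> 'd \<Rightarrow> real) \<Rightarrow> ('n \<Rightarrow> real) \<Rightarrow> ('n \<Rightarrow> 'n) \<Rightarrow> 'n \<Rightarrow> 'n \<Rightarrow> ('n, 'd) obs \<Rightarrow> 'd \<Rightarrow> real" where
  "std_residual \<theta> \<sigma> \<pi> a i \<omega> k = (fst \<omega> a k - snd \<omega> i k - (\<theta> a k - \<theta> (\<pi> i) k)) / noise_scale \<sigma> \<pi> a i"

lemma noise_scale_pos:
  assumes "\<And>i. \<sigma> i > 0" shows "noise_scale \<sigma> \<pi> a i > 0"
  unfolding noise_scale_def using assms[of a] by (simp add: add_pos_nonneg)

lemma measurable_std_residual[measurable]:
  "(\<lambda>\<omega>. std_residual \<theta> \<sigma> \<pi> a i \<omega> k) \<in> borel_measurable (data_law \<theta>' \<sigma>' \<pi>')"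
  unfolding measurable_cong_sets[OF sets_data_law refl] std_residual_def obs_space_def by measurable

lemma nn_integral_std_residual_prod:
  fixes \<theta> :: "'n::finite \<Rightarrow> 'd::finite \<Rightarrow> real" and f :: "'d \<Rightarrow> real \<Rightarrow> real"
    and \<pi> :: "'n \<Rightarrow> 'n" and a i :: 'n
  assumes \<sigma>: "\<And>i. \<sigma> i > 0" and f[measurable]: "\<And>k. f k \<in> borel_measurable borel"
  defines "S \<equiv> noise_scale \<sigma> \<pi> a i" and "\<mu> \<equiv> \<lambda>k. \<theta> a k - \<theta> (\<pi> i) k"
  shows "(\<integral>\<^sup>+\<omega>. (\<Prod>k\<in>UNIV. ennreal (f k (std_residual \<theta> \<sigma> \<pi> a i \<omega> k))) \<partial>data_law \<theta> \<sigma> \<pi>)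
       = (\<Prod>k\<in>UNIV. \<integral>\<^sup>+w. normal_density (\<mu> k) S w * ennreal (f k ((w - \<mu> k) / S)) \<partial>lborel)"
  unfolding std_residual_def S_def \<mu>_def noise_scale_def
  by (rule nn_integral_data_law_diff_prod[OF \<sigma>, where g = "\<lambda>k w. ennreal (f k ((w - \<mu> k) / S))",
        unfolded \<mu>_def S_def noise_scale_def]) simp

lemma mgf_std_residual_sq:
  fixes \<theta> :: "'n::finite \<Rightarrow> 'd::finite \<Rightarrow> real"
  assumes \<sigma>: "\<And>i. \<sigma> i > 0" and c: "c < 1/2"
  shows "(\<integral>\<^sup>+\<omega>. exp (c * (\<Sum>k\<in>UNIV. (std_residual \<theta> \<sigma> \<pi> a i \<omega> k)\<^sup>2)) \<partial>data_law \<theta> \<sigma> \<pi>)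
       = (1 / sqrt (1 - 2 * c)) ^ CARD('d)"
proof -
  have "(\<integral>\<^sup>+\<omega>. exp (c * (\<Sum>k\<in>UNIV. (std_residual \<theta> \<sigma> \<pi> a i \<omega> k)\<^sup>2)) \<partial>data_law \<theta> \<sigma> \<pi>)
      = (\<integral>\<^sup>+\<omega>. (\<Prod>k\<in>UNIV. ennreal (exp (c * (std_residual \<theta> \<sigma> \<pi> a i \<omega> k)\<^sup>2))) \<partial>data_law \<theta> \<sigma> \<pi>)"
    by (simp add: sum_distrib_left exp_sum prod_ennreal)
  also have "\<dots> = (\<Prod>k\<in>UNIV. \<integral>\<^sup>+w. normal_density (\<theta> a k - \<theta> (\<pi> i) k) (noise_scale \<sigma> \<pi> a i) w
      * ennreal (exp (c * ((w - (\<theta> a k - \<theta> (\<pi> i) k)) / noise_scale \<sigma> \<pi> a i)\<^sup>2)) \<partial>lborel)"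
    by (rule nn_integral_std_residual_prod[OF \<sigma>, where f = "\<lambda>k v. exp (c * v\<^sup>2)"]) simp
  also have "\<dots> = (\<Prod>k\<in>(UNIV::'d set). ennreal (1 / sqrt (1 - 2 * c)))"
    by (rule prod.cong[OF refl], rule nn_integral_normal_exp_square[OF noise_scale_pos[OF \<sigma>] c])
  finally show ?thesis
    using c by (simp add: ennreal_power)
qed

lemma mgf_std_residual_linear:
  fixes \<theta> :: "'n::finite \<Rightarrow> 'd::finite \<Rightarrow> real"
  assumes \<sigma>: "\<And>i. \<sigma> i > 0"
  shows "(\<integral>\<^sup>+\<omega>. exp (\<Sum>k\<in>UNIV. t k * std_residual \<theta> \<sigma> \<pi> a i \<omega> k) \<partial>data_law \<theta> \<sigma> \<pi>)
       = exp ((\<Sum>k\<in>UNIV. (t k)\<^sup>2) / 2)"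
proof -
  have "(\<integral>\<^sup>+\<omega>. exp (\<Sum>k\<in>UNIV. t k * std_residual \<theta> \<sigma> \<pi> a i \<omega> k) \<partial>data_law \<theta> \<sigma> \<pi>)
      = (\<integral>\<^sup>+\<omega>. (\<Prod>k\<in>UNIV. ennreal (exp (t k * std_residual \<theta> \<sigma> \<pi> a i \<omega> k))) \<partial>data_law \<theta> \<sigma> \<pi>)"
    by (simp add: exp_sum prod_ennreal)
  also have "\<dots> = (\<Prod>k\<in>UNIV. \<integral>\<^sup>+w. normal_density (\<theta> a k - \<theta> (\<pi> i) k) (noise_scale \<sigma> \<pi> a i) w
      * ennreal (exp (t k * ((w - (\<theta> a k - \<theta> (\<pi> i) k)) / noise_scale \<sigma> \<pi> a i))) \<partial>lborel)"
    by (rule nn_integral_std_residual_prod[OF \<sigma>, where f = "\<lambda>k v. exp (t k * v)"]) simp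
  also have "\<dots> = (\<Prod>k\<in>UNIV. ennreal (exp ((t k)\<^sup>2 / 2)))"
    by (rule prod.cong[OF refl], rule nn_integral_normal_exp_linear[OF noise_scale_pos[OF \<sigma>]])
  finally show ?thesis
    by (simp add: prod_ennreal exp_sum sum_divide_distrib)
qed

lemma sets_data_law_Collect:
  "{\<omega> \<in> space obs_space. Q \<omega>} \<in> sets obs_space
    \<Longrightarrow> {\<omega> \<in> space (data_law \<theta> \<sigma> \<pi>). Q \<omega>} \<in> sets (data_law \<theta> \<sigma> \<pi>)"
  by (simp add: space_data_law sets_data_law)

lemma sets_coincidence:
  "{\<omega> \<in> space (data_law \<theta> \<sigma> \<pi>). fst \<omega> a = snd \<omega> i} \<in> sets (data_law \<theta> \<sigma> \<pi>)"
  by (rule sets_data_law_Collect) (unfold obs_space_def fun_eq_iff, measurable)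

lemma measure_coincidence_zero:
  fixes \<theta> :: "'n::finite \<Rightarrow> 'd::finite \<Rightarrow> real"
  assumes \<sigma>: "\<And>i. \<sigma> i > 0"
  shows "measure (data_law \<theta> \<sigma> \<pi>) {\<omega> \<in> space (data_law \<theta> \<sigma> \<pi>). fst \<omega> a = snd \<omega> i} = 0"
proof -
  let ?P = "data_law \<theta> \<sigma> \<pi>" and ?E = "{\<omega> \<in> space (data_law \<theta> \<sigma> \<pi>). fst \<omega> a = snd \<omega> i}"
  have "emeasure ?P ?E = (\<integral>\<^sup>+\<omega>. indicator ?E \<omega> \<partial>?P)"
    by (rule nn_integral_indicator[symmetric, OF sets_coincidence])
  also have "\<dots> = (\<integral>\<^sup>+\<omega>. (\<Prod>k\<in>UNIV. indicator {0} (fst \<omega> a k - snd \<omega> i k)) \<partial>?P)"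
    by (rule nn_integral_cong) (auto simp: indicator_def fun_eq_iff)
  also have "\<dots> = 0"
    by (subst nn_integral_data_law_diff_prod[OF \<sigma>, where g = "\<lambda>k. indicator {0}"])
       (simp_all add: nn_integral_normal_indicator_singleton)
  finally show ?thesis by (simp add: measure_def)
qed

section \<open>Chernoff bounds\<close>

lemma measure_gt_le_exp_mgf:
  assumes "prob_space M" and f: "f \<in> borel_measurable M" and s: "s > 0"
    and mgf: "(\<integral>\<^sup>+x. exp (s * f x) \<partial>M) = ennreal B" and B: "B \<ge> 0"
  shows "measure M {x \<in> space M. a < f x} \<le> exp (- s * a) * B"
proof -
  interpret prob_space M by fact
  have "emeasure M {x \<in> space M. a < f x} \<le> emeasure M {x \<in> space M. f x \<ge> a}"
    using f by (intro emeasure_mono) auto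
  also have "\<dots> \<le> exp (- s * a) * (\<integral>\<^sup>+x. ennreal (exp (s * f x)) * indicator (space M) x \<partial>M)"
    using f s by (intro Chernoff_ineq_nn_integral_ge) auto
  also have "(\<integral>\<^sup>+x. ennreal (exp (s * f x)) * indicator (space M) x \<partial>M) = ennreal B"
    unfolding mgf[symmetric] by (intro nn_integral_cong) auto
  finally show ?thesis
    using B by (simp add: emeasure_eq_measure ennreal_mult[symmetric])
qed

lemma ln_one_plus_upper_bound:
  fixes u :: real assumes u: "u \<ge> 0"
  shows "ln (1 + u) \<le> u * (2 + u) / (2 * (1 + u))"
proof -
  let ?f = "\<lambda>x::real. (1 + x) / 2 - 1 / (2 * (1 + x)) - ln (1 + x)"
  have "?f 0 \<le> ?f u"
  proof (rule DERIV_nonneg_imp_nondecreasing[OF u])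
    fix x :: real assume "0 \<le> x"
    then have "(?f has_real_derivative x\<^sup>2 / (2 * (1 + x)\<^sup>2)) (at x)"
      by (auto intro!: derivative_eq_intros, simp add: divide_simps, simp add: algebra_simps power2_eq_square)
    then show "\<exists>y. (?f has_real_derivative y) (at x) \<and> 0 \<le> y" by auto
  qed
  then show ?thesis using u by (simp add: field_simps)
qed

lemma ln_one_plus_quadratic_lower_bound:
  fixes u :: real assumes u: "u \<ge> 0"
  shows "u - u\<^sup>2 / 2 \<le> ln (1 + u)"
proof -
  let ?f = "\<lambda>x::real. ln (1 + x) - x + x\<^sup>2 / 2"
  have "?f 0 \<le> ?f u"
  proof (rule DERIV_nonneg_imp_nondecreasing[OF u])
    fix x :: real assume x: "0 \<le> x"
    then have "(?f has_real_derivative x\<^sup>2 / (1 + x)) (at x)"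
      by (auto intro!: derivative_eq_intros, simp add: divide_simps, simp add: algebra_simps power2_eq_square)
    then show "\<exists>y. (?f has_real_derivative y) (at x) \<and> 0 \<le> y" using x by auto
  qed
  then show ?thesis by simp
qed

lemma chi_square_upper_exponent:
  fixes r :: real and N :: nat assumes r: "r > 0"
  shows "exp (- (r / (1 + 2 * r)) * (N * (1 + 2 * r + 2 * r\<^sup>2))) * sqrt (1 + 2 * r) ^ N
       \<le> exp (- real N * r\<^sup>2)"
proof -
  have power: "sqrt (1 + 2 * r) ^ N = exp (N * (ln (1 + 2 * r) / 2))"
    using r by (simp add: exp_of_nat_mult ln_sqrt[symmetric])
  define q where "q = r * (1 + 2 * r + 2 * r\<^sup>2) / (1 + 2 * r)"
  have "ln (1 + 2 * r) / 2 \<le> q - r\<^sup>2"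
    using ln_one_plus_upper_bound[of "2 * r"] r by (simp add: q_def field_simps power2_eq_square)
  then have "N * (ln (1 + 2 * r) / 2) \<le> N * (q - r\<^sup>2)"
    by (rule mult_left_mono) simp
  moreover have "r / (1 + 2 * r) * (N * (1 + 2 * r + 2 * r\<^sup>2)) = N * q"
    by (simp add: q_def)
  ultimately show ?thesis
    unfolding power by (simp add: exp_add[symmetric] right_diff_distrib)
qed

lemma chi_square_lower_exponent:
  fixes r :: real and N :: nat assumes r: "r > 0"
  shows "exp (r * (N * (1 - 2 * r))) * (1 / sqrt (1 + 2 * r)) ^ N \<le> exp (- real N * r\<^sup>2)"
proof -
  have "(1 / sqrt (1 + 2 * r)) ^ N = exp (N * (- ln (1 + 2 * r) / 2))"
    using r by (simp add: exp_of_nat_mult exp_minus ln_sqrt[symmetric] inverse_eq_divide power_one_over)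
  moreover have "N * (2 * r - (2 * r)\<^sup>2 / 2) \<le> N * ln (1 + 2 * r)"
    using ln_one_plus_quadratic_lower_bound[of "2 * r"] r by (intro mult_left_mono) simp_all
  ultimately show ?thesis
    by (simp add: exp_add[symmetric] algebra_simps power2_eq_square)
qed

lemma chi_square_upper_tail:
  fixes \<theta> :: "'n::finite \<Rightarrow> 'd::finite \<Rightarrow> real"
  assumes \<sigma>: "\<And>i. \<sigma> i > 0" and r: "r > 0"
  shows "measure (data_law \<theta> \<sigma> \<pi>) {\<omega> \<in> space (data_law \<theta> \<sigma> \<pi>).
           real CARD('d) * (1 + 2 * r + 2 * r\<^sup>2) < (\<Sum>k\<in>UNIV. (std_residual \<theta> \<sigma> \<pi> a i \<omega> k)\<^sup>2)}
       \<le> exp (- real CARD('d) * r\<^sup>2)"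
proof -
  define l where "l = r / (1 + 2 * r)"
  have l: "l > 0" "l < 1/2" and "1 / sqrt (1 - 2 * l) = sqrt (1 + 2 * r)"
    using r by (auto simp: l_def field_simps real_sqrt_divide)
  then have "(\<integral>\<^sup>+\<omega>. exp (l * (\<Sum>k\<in>UNIV. (std_residual \<theta> \<sigma> \<pi> a i \<omega> k)\<^sup>2)) \<partial>data_law \<theta> \<sigma> \<pi>)
      = ennreal (sqrt (1 + 2 * r) ^ CARD('d))"
    using mgf_std_residual_sq[OF \<sigma> l(2)] by simp
  then have "measure (data_law \<theta> \<sigma> \<pi>) {\<omega> \<in> space (data_law \<theta> \<sigma> \<pi>).
           real CARD('d) * (1 + 2 * r + 2 * r\<^sup>2) < (\<Sum>k\<in>UNIV. (std_residual \<theta> \<sigma> \<pi> a i \<omega> k)\<^sup>2)}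
      \<le> exp (- l * (real CARD('d) * (1 + 2 * r + 2 * r\<^sup>2))) * sqrt (1 + 2 * r) ^ CARD('d)"
    using r by (intro measure_gt_le_exp_mgf prob_space_data_law \<sigma> l(1)) auto
  also have "\<dots> \<le> exp (- real CARD('d) * r\<^sup>2)"
    unfolding l_def by (rule chi_square_upper_exponent[OF r])
  finally show ?thesis .
qed

lemma chi_square_lower_tail:
  fixes \<theta> :: "'n::finite \<Rightarrow> 'd::finite \<Rightarrow> real"
  assumes \<sigma>: "\<And>i. \<sigma> i > 0" and r: "r > 0"
  shows "measure (data_law \<theta> \<sigma> \<pi>) {\<omega> \<in> space (data_law \<theta> \<sigma> \<pi>).
           (\<Sum>k\<in>UNIV. (std_residual \<theta> \<sigma> \<pi> a i \<omega> k)\<^sup>2) < real CARD('d) * (1 - 2 * r)}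
       \<le> exp (- real CARD('d) * r\<^sup>2)"
proof -
  have "(\<integral>\<^sup>+\<omega>. exp (r * - (\<Sum>k\<in>UNIV. (std_residual \<theta> \<sigma> \<pi> a i \<omega> k)\<^sup>2)) \<partial>data_law \<theta> \<sigma> \<pi>)
      = ennreal ((1 / sqrt (1 + 2 * r)) ^ CARD('d))"
    using mgf_std_residual_sq[OF \<sigma>, of "- r"] r by simp
  then have "measure (data_law \<theta> \<sigma> \<pi>) {\<omega> \<in> space (data_law \<theta> \<sigma> \<pi>).
           - (real CARD('d) * (1 - 2 * r)) < - (\<Sum>k\<in>UNIV. (std_residual \<theta> \<sigma> \<pi> a i \<omega> k)\<^sup>2)}
      \<le> exp (- r * - (real CARD('d) * (1 - 2 * r))) * (1 / sqrt (1 + 2 * r)) ^ CARD('d)"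
    using r by (intro measure_gt_le_exp_mgf prob_space_data_law \<sigma> r) auto
  also have "\<dots> \<le> exp (- real CARD('d) * r\<^sup>2)"
    using chi_square_lower_exponent[OF r] by simp
  finally show ?thesis by simp
qed

lemma gaussian_linear_lower_tail:
  fixes \<theta> :: "'n::finite \<Rightarrow> 'd::finite \<Rightarrow> real" and t :: "'d \<Rightarrow> real"
  assumes \<sigma>: "\<And>i. \<sigma> i > 0" and \<nu>: "(\<Sum>k\<in>UNIV. (t k)\<^sup>2) = \<nu>" "\<nu> > 0" and s: "s > 0"
  shows "measure (data_law \<theta> \<sigma> \<pi>) {\<omega> \<in> space (data_law \<theta> \<sigma> \<pi>).
           (\<Sum>k\<in>UNIV. t k * std_residual \<theta> \<sigma> \<pi> a i \<omega> k) < - s}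
       \<le> exp (- s\<^sup>2 / (2 * \<nu>))"
proof -
  define l where "l = s / \<nu>"
  have l: "l > 0" using s \<nu> by (simp add: l_def)
  have "(\<integral>\<^sup>+\<omega>. exp (l * - (\<Sum>k\<in>UNIV. t k * std_residual \<theta> \<sigma> \<pi> a i \<omega> k)) \<partial>data_law \<theta> \<sigma> \<pi>)
      = (\<integral>\<^sup>+\<omega>. exp (\<Sum>k\<in>UNIV. (- l * t k) * std_residual \<theta> \<sigma> \<pi> a i \<omega> k) \<partial>data_law \<theta> \<sigma> \<pi>)"
    by (simp add: sum_distrib_left sum_negf[symmetric] mult.assoc)
  also have "\<dots> = ennreal (exp (l\<^sup>2 * \<nu> / 2))"
    unfolding mgf_std_residual_linear[OF \<sigma>] \<nu>(1)[symmetric]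
    by (simp add: power_mult_distrib sum_distrib_left)
  finally have "measure (data_law \<theta> \<sigma> \<pi>) {\<omega> \<in> space (data_law \<theta> \<sigma> \<pi>).
           s < - (\<Sum>k\<in>UNIV. t k * std_residual \<theta> \<sigma> \<pi> a i \<omega> k)}
      \<le> exp (- l * s) * exp (l\<^sup>2 * \<nu> / 2)"
    by (intro measure_gt_le_exp_mgf prob_space_data_law \<sigma> l) auto
  also have "\<dots> = exp (- s\<^sup>2 / (2 * \<nu>))"
    using \<nu> by (simp add: l_def exp_add[symmetric] field_simps power2_eq_square)
  finally show ?thesis by (simp add: less_minus_iff)
qed

section \<open>Optimality of the true permutation\<close>

lemma sum_assignment_less:
  fixes D :: "'a::finite \<Rightarrow> 'a \<Rightarrow> real"
  assumes "\<tau> \<noteq> \<pi>" and le: "\<And>i. D (\<pi> i) i \<le> M" and gt: "\<And>i a. a \<noteq> \<pi> i \<Longrightarrow> M < D a i"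
  shows "(\<Sum>i\<in>UNIV. D (\<pi> i) i) < (\<Sum>i\<in>UNIV. D (\<tau> i) i)"
proof (rule sum_strict_mono_ex1)
  show "\<forall>i\<in>UNIV. D (\<pi> i) i \<le> D (\<tau> i) i"
    using le gt by (metis order.trans less_imp_le order.refl)
  obtain i where "\<tau> i \<noteq> \<pi> i" using \<open>\<tau> \<noteq> \<pi>\<close> by auto
  then show "\<exists>i\<in>UNIV. D (\<pi> i) i < D (\<tau> i) i"
    using le gt by (meson UNIV_I le_less_trans)
qed simp

lemma sum_ln_assignment_less:
  fixes E :: "'a::finite \<Rightarrow> 'a \<Rightarrow> real" and \<sigma> :: "'a \<Rightarrow> real"
  assumes \<pi>: "\<pi> permutes UNIV" and \<tau>: "\<tau> permutes UNIV" "\<tau> \<noteq> \<pi>"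
    and \<sigma>: "\<And>i. \<sigma> i > 0" and M: "M > 0" and pos: "\<And>i. E (\<pi> i) i > 0"
    and le: "\<And>i. E (\<pi> i) i \<le> M * (2 * (\<sigma> (\<pi> i))\<^sup>2)"
    and gt: "\<And>i a. a \<noteq> \<pi> i \<Longrightarrow> M * ((\<sigma> a)\<^sup>2 + (\<sigma> (\<pi> i))\<^sup>2) < E a i"
  shows "(\<Sum>i\<in>UNIV. ln (E (\<pi> i) i)) < (\<Sum>i\<in>UNIV. ln (E (\<tau> i) i))"
proof -
  let ?f = "\<lambda>i. ln (E (\<pi> i) i) + (ln (\<sigma> (\<tau> i)) - ln (\<sigma> (\<pi> i)))"
  have "(\<Sum>i\<in>UNIV. ln (\<sigma> (\<tau> i))) = (\<Sum>i\<in>UNIV. ln (\<sigma> (\<pi> i)))"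
    using sum.permute[OF \<tau>(1), of "\<lambda>i. ln (\<sigma> i)"] sum.permute[OF \<pi>, of "\<lambda>i. ln (\<sigma> i)"]
    by (simp add: comp_def)
  then have sum_f: "(\<Sum>i\<in>UNIV. ?f i) = (\<Sum>i\<in>UNIV. ln (E (\<pi> i) i))"
    by (simp add: sum.distrib sum_subtractf)
  have ratio_less: "E (\<pi> i) i * (\<sigma> a / \<sigma> (\<pi> i)) < E a i" if "a \<noteq> \<pi> i" for a i
  proof -
    have "E (\<pi> i) i * (\<sigma> a / \<sigma> (\<pi> i)) \<le> M * (2 * (\<sigma> (\<pi> i))\<^sup>2) * (\<sigma> a / \<sigma> (\<pi> i))"
      using le[of i] \<sigma>[of a] \<sigma>[of "\<pi> i"] by (intro mult_right_mono) auto
    also have "\<dots> = M * (2 * \<sigma> a * \<sigma> (\<pi> i))"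
      using \<sigma>[of "\<pi> i"] by (simp add: power2_eq_square)
    also have "\<dots> \<le> M * ((\<sigma> a)\<^sup>2 + (\<sigma> (\<pi> i))\<^sup>2)"
      using M sum_squares_bound[of "\<sigma> a" "\<sigma> (\<pi> i)"] by (intro mult_left_mono) auto
    also have "\<dots> < E a i" by (rule gt[OF that])
    finally show ?thesis .
  qed
  have f_le: "?f i \<le> ln (E (\<tau> i) i)" and f_less: "\<tau> i \<noteq> \<pi> i \<Longrightarrow> ?f i < ln (E (\<tau> i) i)" for i
  proof -
    have "?f i = ln (E (\<pi> i) i * (\<sigma> (\<tau> i) / \<sigma> (\<pi> i)))"
      using pos[of i] \<sigma>[of "\<tau> i"] \<sigma>[of "\<pi> i"] by (simp add: ln_mult ln_div)
    moreover have "0 < E (\<pi> i) i * (\<sigma> (\<tau> i) / \<sigma> (\<pi> i))"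
      using pos[of i] \<sigma>[of "\<tau> i"] \<sigma>[of "\<pi> i"] by simp
    ultimately show "\<tau> i \<noteq> \<pi> i \<Longrightarrow> ?f i < ln (E (\<tau> i) i)"
      using ratio_less[of "\<tau> i" i] by (metis ln_less_cancel_iff order.strict_trans)
    then show "?f i \<le> ln (E (\<tau> i) i)"
      by (cases "\<tau> i = \<pi> i") auto
  qed
  obtain i where "\<tau> i \<noteq> \<pi> i" using \<tau>(2) by auto
  then have "(\<Sum>i\<in>UNIV. ?f i) < (\<Sum>i\<in>UNIV. ln (E (\<tau> i) i))"
    using f_le f_less by (intro sum_strict_mono_ex1) auto
  then show ?thesis by (simp only: sum_f)
qed

definition scaled_sqdist :: "('n \<Rightarrow> real) \<Rightarrow> ('n \<Rightarrow> 'n) \<Rightarrow> ('n, 'd::finite) obs \<Rightarrow> 'n \<Rightarrow> 'n \<Rightarrow> real" where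
  "scaled_sqdist \<sigma> \<pi> \<omega> a i = sqdist (fst \<omega> a) (snd \<omega> i) / ((\<sigma> a)\<^sup>2 + (\<sigma> (\<pi> i))\<^sup>2)"

lemma sqdist_pos: "x \<noteq> y \<Longrightarrow> 0 < sqdist x y"
proof -
  assume "x \<noteq> y"
  then obtain k where "x k \<noteq> y k" by auto
  then have "0 < (x k - y k)\<^sup>2" by simp
  also have "\<dots> \<le> sqdist x y"
    unfolding sqdist_def by (rule member_le_sum) auto
  finally show ?thesis .
qed

lemma estimator_eq_of_separated:
  fixes est :: "('n::finite \<Rightarrow> real) \<Rightarrow> ('n, 'd::finite) obs \<Rightarrow> 'n \<Rightarrow> 'n"
  assumes \<sigma>: "\<And>i. \<sigma> i > 0" and \<pi>: "\<pi> permutes UNIV" and est: "is_LSNS \<sigma> est \<or> is_LSL \<sigma> est"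
    and M: "M > 0" and distinct: "\<And>i. fst \<omega> (\<pi> i) \<noteq> snd \<omega> i"
    and le: "\<And>i. scaled_sqdist \<sigma> \<pi> \<omega> (\<pi> i) i \<le> M"
    and gt: "\<And>i a. a \<noteq> \<pi> i \<Longrightarrow> M < scaled_sqdist \<sigma> \<pi> \<omega> a i"
  shows "est (\<sigma> \<circ> \<pi>) \<omega> = \<pi>"
proof (rule ccontr)
  let ?\<tau> = "est (\<sigma> \<circ> \<pi>) \<omega>"
  assume ne: "?\<tau> \<noteq> \<pi>"
  have denom: "(\<sigma> a)\<^sup>2 + (\<sigma> b)\<^sup>2 > 0" for a b
    using \<sigma>[of a] by (simp add: add_pos_nonneg)
  from est show False
  proof
    assume "is_LSNS \<sigma> est"
    then have "crit_LSNS \<sigma> (\<sigma> \<circ> \<pi>) \<omega> ?\<tau> \<le> crit_LSNS \<sigma> (\<sigma> \<circ> \<pi>) \<omega> \<pi>"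
      using \<pi> unfolding is_LSNS_def by blast
    moreover have "crit_LSNS \<sigma> (\<sigma> \<circ> \<pi>) \<omega> \<pi> < crit_LSNS \<sigma> (\<sigma> \<circ> \<pi>) \<omega> ?\<tau>"
      using sum_assignment_less[where D = "scaled_sqdist \<sigma> \<pi> \<omega>", OF ne le gt] by (simp add: crit_LSNS_def scaled_sqdist_def)
    ultimately show False by simp
  next
    assume "is_LSL \<sigma> est"
    then have \<tau>: "?\<tau> permutes UNIV" and "crit_LSL \<omega> ?\<tau> \<le> crit_LSL \<omega> \<pi>"
      using \<pi> unfolding is_LSL_def by blast+
    moreover have "crit_LSL \<omega> \<pi> < crit_LSL \<omega> ?\<tau>"
      unfolding crit_LSL_def
    proof (rule sum_ln_assignment_less[OF \<pi> \<tau> ne \<sigma> M])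
      show "0 < sqdist (fst \<omega> (\<pi> i)) (snd \<omega> i)" for i
        by (rule sqdist_pos[OF distinct])
      show "sqdist (fst \<omega> (\<pi> i)) (snd \<omega> i) \<le> M * (2 * (\<sigma> (\<pi> i))\<^sup>2)" for i
        using le[of i] denom[of "\<pi> i" "\<pi> i"] by (simp add: scaled_sqdist_def pos_divide_le_eq)
      show "M * ((\<sigma> a)\<^sup>2 + (\<sigma> (\<pi> i))\<^sup>2) < sqdist (fst \<omega> a) (snd \<omega> i)" if "a \<noteq> \<pi> i" for a i
        using gt[OF that] denom[of a "\<pi> i"] by (simp add: scaled_sqdist_def pos_less_divide_eq)
    qed
    ultimately show False by simp
  qed
qed

section \<open>Error probability\<close>

definition std_gap :: "('n \<Rightarrow> 'd \<Rightarrow> real) \<Rightarrow> ('n \<Rightarrow> real) \<Rightarrow> ('n \<Rightarrow> 'n) \<Rightarrow> 'n \<Rightarrow> 'n \<Rightarrow> 'd \<Rightarrow> real" where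
  "std_gap \<theta> \<sigma> \<pi> a i k = (\<theta> a k - \<theta> (\<pi> i) k) / noise_scale \<sigma> \<pi> a i"

lemma scaled_sqdist_decomp:
  fixes \<theta> :: "'n::finite \<Rightarrow> 'd::finite \<Rightarrow> real"
  assumes \<sigma>: "\<And>i. \<sigma> i > 0"
  shows "scaled_sqdist \<sigma> \<pi> \<omega> a i
    = (\<Sum>k\<in>UNIV. (std_residual \<theta> \<sigma> \<pi> a i \<omega> k)\<^sup>2)
      + 2 * (\<Sum>k\<in>UNIV. std_gap \<theta> \<sigma> \<pi> a i k * std_residual \<theta> \<sigma> \<pi> a i \<omega> k)
      + (\<Sum>k\<in>UNIV. (std_gap \<theta> \<sigma> \<pi> a i k)\<^sup>2)"
proof -
  let ?S = "noise_scale \<sigma> \<pi> a i"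
  have S: "?S > 0" by (rule noise_scale_pos[OF \<sigma>])
  have "(\<sigma> a)\<^sup>2 + (\<sigma> (\<pi> i))\<^sup>2 = ?S\<^sup>2"
    unfolding noise_scale_def by (simp add: add_nonneg_nonneg)
  then have "scaled_sqdist \<sigma> \<pi> \<omega> a i = (\<Sum>k\<in>UNIV. ((fst \<omega> a k - snd \<omega> i k) / ?S)\<^sup>2)"
    by (simp add: scaled_sqdist_def sqdist_def sum_divide_distrib power_divide)
  also have "\<dots> = (\<Sum>k\<in>UNIV. (std_residual \<theta> \<sigma> \<pi> a i \<omega> k + std_gap \<theta> \<sigma> \<pi> a i k)\<^sup>2)"
    using S by (intro sum.cong refl) (simp add: std_residual_def std_gap_def field_simps)
  finally show ?thesis
    by (simp add: power2_sum sum.distrib sum_distrib_left algebra_simps)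
qed

lemma rel_sep_le_std_gap_norm:
  fixes \<theta> :: "'n::finite \<Rightarrow> 'd::finite \<Rightarrow> real"
  assumes \<sigma>: "\<And>i. \<sigma> i > 0" and a: "a \<noteq> \<pi> i"
  shows "rel_sep \<theta> \<sigma> \<le> sqrt (\<Sum>k\<in>UNIV. (std_gap \<theta> \<sigma> \<pi> a i k)\<^sup>2)"
proof -
  let ?pairs = "{eucl_norm (\<lambda>k. \<theta> i k - \<theta> j k) / sqrt ((\<sigma> i)\<^sup>2 + (\<sigma> j)\<^sup>2) | i j. i \<noteq> j}"
  have "?pairs \<subseteq> (\<lambda>(i, j). eucl_norm (\<lambda>k. \<theta> i k - \<theta> j k) / sqrt ((\<sigma> i)\<^sup>2 + (\<sigma> j)\<^sup>2)) ` UNIV"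
    by auto
  then have "rel_sep \<theta> \<sigma> \<le> eucl_norm (\<lambda>k. \<theta> a k - \<theta> (\<pi> i) k) / noise_scale \<sigma> \<pi> a i"
    unfolding rel_sep_def noise_scale_def using a by (intro Min_le finite_subset[of ?pairs]) auto
  also have "\<dots> = sqrt (\<Sum>k\<in>UNIV. (std_gap \<theta> \<sigma> \<pi> a i k)\<^sup>2)"
    using noise_scale_pos[of \<sigma> \<pi> a i] \<sigma>
    by (simp add: eucl_norm_def std_gap_def power_divide real_sqrt_divide flip: sum_divide_distrib)
  finally show ?thesis .
qed

lemma measurable_scaled_sqdist[measurable]:
  "(\<lambda>\<omega>. scaled_sqdist \<sigma> \<pi> \<omega> a i) \<in> borel_measurable (data_law \<theta>' \<sigma>' \<pi>')"
  unfolding measurable_cong_sets[OF sets_data_law refl] scaled_sqdist_def sqdist_def obs_space_def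
  by measurable

lemma laurent_massart_terms:
  fixes d L :: real assumes d: "d > 0" and L: "L \<ge> 0"
  shows "d * (1 + 2 * sqrt (L / d) + 2 * (sqrt (L / d))\<^sup>2) = d + 2 * sqrt (d * L) + 2 * L"
    and "d * (1 - 2 * sqrt (L / d)) = d - 2 * sqrt (d * L)"
    and "d * (sqrt (L / d))\<^sup>2 = L"
proof -
  have "d * sqrt (L / d) = sqrt (d * L)"
    using d L by (simp add: real_sqrt_divide real_sqrt_mult field_simps)
  moreover have "d * (sqrt (L / d))\<^sup>2 = L" using d L by simp
  ultimately show "d * (1 + 2 * sqrt (L / d) + 2 * (sqrt (L / d))\<^sup>2) = d + 2 * sqrt (d * L) + 2 * L"
      "d * (1 - 2 * sqrt (L / d)) = d - 2 * sqrt (d * L)" "d * (sqrt (L / d))\<^sup>2 = L"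
    by (simp_all add: algebra_simps)
qed

lemma prob_matched_pair_bad:
  fixes \<theta> :: "'n::finite \<Rightarrow> 'd::finite \<Rightarrow> real"
  assumes \<sigma>: "\<And>i. \<sigma> i > 0" and L: "L > 0"
  defines "d \<equiv> real CARD('d)"
  shows "measure (data_law \<theta> \<sigma> \<pi>) {\<omega> \<in> space (data_law \<theta> \<sigma> \<pi>).
           fst \<omega> (\<pi> i) = snd \<omega> i \<or> d + 2 * sqrt (d * L) + 2 * L < scaled_sqdist \<sigma> \<pi> \<omega> (\<pi> i) i}
       \<le> exp (- L)"
proof -
  let ?P = "data_law \<theta> \<sigma> \<pi>" and ?Y = "\<lambda>\<omega>. \<Sum>k\<in>UNIV. (std_residual \<theta> \<sigma> \<pi> (\<pi> i) i \<omega> k)\<^sup>2"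
  define r where "r = sqrt (L / d)"
  have d: "d > 0" by (simp add: d_def)
  have r: "r > 0" using L d by (simp add: r_def)
  have "scaled_sqdist \<sigma> \<pi> \<omega> (\<pi> i) i = ?Y \<omega>" for \<omega>
    by (simp add: scaled_sqdist_decomp[OF \<sigma>, where \<theta> = \<theta>] std_gap_def)
  then have "{\<omega> \<in> space ?P. fst \<omega> (\<pi> i) = snd \<omega> i \<or> d + 2 * sqrt (d * L) + 2 * L
      < scaled_sqdist \<sigma> \<pi> \<omega> (\<pi> i) i}
    = {\<omega> \<in> space ?P. fst \<omega> (\<pi> i) = snd \<omega> i} \<union> {\<omega> \<in> space ?P. d * (1 + 2 * r + 2 * r\<^sup>2) < ?Y \<omega>}"
    using laurent_massart_terms(1)[OF d, of L] L by (auto simp: r_def)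
  then have "measure ?P {\<omega> \<in> space ?P. fst \<omega> (\<pi> i) = snd \<omega> i \<or> d + 2 * sqrt (d * L) + 2 * L
      < scaled_sqdist \<sigma> \<pi> \<omega> (\<pi> i) i}
    \<le> measure ?P {\<omega> \<in> space ?P. fst \<omega> (\<pi> i) = snd \<omega> i}
      + measure ?P {\<omega> \<in> space ?P. d * (1 + 2 * r + 2 * r\<^sup>2) < ?Y \<omega>}"
    by (simp only:) (rule measure_Un_le[OF sets_coincidence], measurable)
  also have "\<dots> \<le> 0 + exp (- d * r\<^sup>2)"
  proof (rule add_mono)
    show "measure ?P {\<omega> \<in> space ?P. fst \<omega> (\<pi> i) = snd \<omega> i} \<le> 0"
      by (simp add: measure_coincidence_zero[OF \<sigma>])
    show "measure ?P {\<omega> \<in> space ?P. d * (1 + 2 * r + 2 * r\<^sup>2) < ?Y \<omega>} \<le> exp (- d * r\<^sup>2)"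
      unfolding d_def by (rule chi_square_upper_tail[OF \<sigma> r])
  qed
  finally show ?thesis
    using laurent_massart_terms(3)[OF d, of L] L by (simp add: r_def)
qed

lemma mismatch_margin:
  fixes d L K q Y c :: real
  assumes "d \<ge> 0" "L \<ge> 0" "K < q" and K1: "4 * sqrt (2 * L) \<le> K" and K2: "16 * sqrt (d * L) \<le> K\<^sup>2"
    and "d - 2 * sqrt (d * L) \<le> Y" "- (sqrt (2 * L) * q) \<le> c"
  shows "d + 2 * sqrt (d * L) + 2 * L < Y + 2 * c + q\<^sup>2"
proof -
  have K: "K \<ge> 0" using K1 real_sqrt_ge_zero[of "2 * L"] \<open>L \<ge> 0\<close> by linarith
  have q: "4 * sqrt (2 * L) < q" "q > 0"
    using assms(3) K1 K by linarith+
  have "2 * (sqrt (2 * L) * q) \<le> q\<^sup>2 / 2"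
    using mult_right_mono[OF less_imp_le[OF q(1)], of q] q(2) by (simp add: power2_eq_square)
  moreover have "2 * L \<le> q\<^sup>2 / 16"
    using power_mono[OF less_imp_le[OF q(1)], of 2] \<open>L \<ge> 0\<close> by (simp add: power_mult_distrib)
  moreover have "16 * sqrt (d * L) < q\<^sup>2"
    using K2 power_strict_mono[OF assms(3) K, of 2] by simp
  ultimately show ?thesis using assms(6,7) zero_le_power2[of q] by linarith
qed

lemma prob_mismatched_pair_close:
  fixes \<theta> :: "'n::finite \<Rightarrow> 'd::finite \<Rightarrow> real"
  defines "d \<equiv> real CARD('d)"
  assumes \<sigma>: "\<And>i. \<sigma> i > 0" and L: "L > 0" and a: "a \<noteq> \<pi> i" and sep: "K < rel_sep \<theta> \<sigma>"
    and K1: "4 * sqrt (2 * L) \<le> K" and K2: "16 * sqrt (d * L) \<le> K\<^sup>2"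
  shows "measure (data_law \<theta> \<sigma> \<pi>) {\<omega> \<in> space (data_law \<theta> \<sigma> \<pi>).
           scaled_sqdist \<sigma> \<pi> \<omega> a i \<le> d + 2 * sqrt (d * L) + 2 * L}
       \<le> 2 * exp (- L)"
proof -
  let ?P = "data_law \<theta> \<sigma> \<pi>"
  let ?Y = "\<lambda>\<omega>. \<Sum>k\<in>UNIV. (std_residual \<theta> \<sigma> \<pi> a i \<omega> k)\<^sup>2"
  let ?C = "\<lambda>\<omega>. \<Sum>k\<in>UNIV. std_gap \<theta> \<sigma> \<pi> a i k * std_residual \<theta> \<sigma> \<pi> a i \<omega> k"
  define \<nu> where "\<nu> = (\<Sum>k\<in>UNIV. (std_gap \<theta> \<sigma> \<pi> a i k)\<^sup>2)"
  define r where "r = sqrt (L / d)"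
  interpret prob_space ?P by (rule prob_space_data_law[where \<sigma> = \<sigma>, OF \<sigma>])
  have d: "d > 0" by (simp add: d_def)
  have r: "r > 0" using L d by (simp add: r_def)
  have q: "K < sqrt \<nu>"
    using rel_sep_le_std_gap_norm[where \<sigma> = \<sigma> and \<pi> = \<pi> and i = i and \<theta> = \<theta>, OF \<sigma> a] sep
    by (simp add: \<nu>_def)
  have "0 < sqrt \<nu>"
    using q K1 real_sqrt_ge_zero[of "2 * L"] L by linarith
  then have \<nu>: "\<nu> > 0" by simp
  have decomp: "scaled_sqdist \<sigma> \<pi> \<omega> a i = ?Y \<omega> + 2 * ?C \<omega> + (sqrt \<nu>)\<^sup>2" for \<omega>
    using scaled_sqdist_decomp[where \<sigma> = \<sigma> and \<theta> = \<theta>, OF \<sigma>] \<nu> by (simp add: \<nu>_def)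
  have "{\<omega> \<in> space ?P. scaled_sqdist \<sigma> \<pi> \<omega> a i \<le> d + 2 * sqrt (d * L) + 2 * L}
      \<subseteq> {\<omega> \<in> space ?P. ?Y \<omega> < d * (1 - 2 * r)} \<union> {\<omega> \<in> space ?P. ?C \<omega> < - (sqrt (2 * L) * sqrt \<nu>)}"
  proof (rule subsetI, rule ccontr)
    fix \<omega> assume \<omega>: "\<omega> \<in> {\<omega> \<in> space ?P. scaled_sqdist \<sigma> \<pi> \<omega> a i \<le> d + 2 * sqrt (d * L) + 2 * L}"
      and "\<omega> \<notin> {\<omega> \<in> space ?P. ?Y \<omega> < d * (1 - 2 * r)} \<union> {\<omega> \<in> space ?P. ?C \<omega> < - (sqrt (2 * L) * sqrt \<nu>)}"
    then have "d - 2 * sqrt (d * L) \<le> ?Y \<omega>" "- (sqrt (2 * L) * sqrt \<nu>) \<le> ?C \<omega>"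
      using laurent_massart_terms(2)[OF d, of L] L by (auto simp: r_def)
    then have "d + 2 * sqrt (d * L) + 2 * L < ?Y \<omega> + 2 * ?C \<omega> + (sqrt \<nu>)\<^sup>2"
      using d L by (intro mismatch_margin[OF _ _ q K1 K2]) simp_all
    then show False using \<omega> decomp[of \<omega>] by simp
  qed
  then have "measure ?P {\<omega> \<in> space ?P. scaled_sqdist \<sigma> \<pi> \<omega> a i \<le> d + 2 * sqrt (d * L) + 2 * L}
      \<le> measure ?P {\<omega> \<in> space ?P. ?Y \<omega> < d * (1 - 2 * r)}
        + measure ?P {\<omega> \<in> space ?P. ?C \<omega> < - (sqrt (2 * L) * sqrt \<nu>)}"
    by (rule order.trans[OF finite_measure_mono measure_Un_le]) simp_all
  also have "\<dots> \<le> exp (- L) + exp (- L)"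
  proof (rule add_mono)
    show "measure ?P {\<omega> \<in> space ?P. ?Y \<omega> < d * (1 - 2 * r)} \<le> exp (- L)"
      using chi_square_lower_tail[where \<sigma> = \<sigma>, OF \<sigma> r, of \<theta> \<pi> a i] laurent_massart_terms(3)[OF d, of L] L
      by (simp add: d_def r_def)
    have "(sqrt (2 * L) * sqrt \<nu>)\<^sup>2 / (2 * \<nu>) = L"
      using L \<nu> by (simp add: power_mult_distrib)
    then show "measure ?P {\<omega> \<in> space ?P. ?C \<omega> < - (sqrt (2 * L) * sqrt \<nu>)} \<le> exp (- L)"
      using gaussian_linear_lower_tail[where \<sigma> = \<sigma>, OF \<sigma> \<nu>_def[symmetric] \<nu>, of "sqrt (2 * L) * sqrt \<nu>" \<theta> \<pi> a i] L \<nu>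
      by simp
  qed
  finally show ?thesis by simp
qed

lemma error_probability_le:
  fixes \<theta> :: "'n::finite \<Rightarrow> 'd::finite \<Rightarrow> real" and est :: "('n \<Rightarrow> real) \<Rightarrow> ('n, 'd) obs \<Rightarrow> 'n \<Rightarrow> 'n"
  defines "d \<equiv> real CARD('d)"
  assumes \<sigma>: "\<And>i. \<sigma> i > 0" and \<pi>: "\<pi> permutes UNIV" and est: "is_LSNS \<sigma> est \<or> is_LSL \<sigma> est"
    and L: "L > 0" and K1: "4 * sqrt (2 * L) \<le> K" and K2: "16 * sqrt (d * L) \<le> K\<^sup>2"
    and sep: "K < rel_sep \<theta> \<sigma>"
  shows "measure (data_law \<theta> \<sigma> \<pi>) {\<omega> \<in> space (data_law \<theta> \<sigma> \<pi>). est (\<sigma> \<circ> \<pi>) \<omega> \<noteq> \<pi>}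
       \<le> 2 * (real CARD('n))\<^sup>2 * exp (- L)"
proof -
  let ?P = "data_law \<theta> \<sigma> \<pi>"
  interpret prob_space ?P by (rule prob_space_data_law[OF \<sigma>])
  define M where "M = d + 2 * sqrt (d * L) + 2 * L"
  define bad where "bad a i = (if a = \<pi> i
      then {\<omega> \<in> space ?P. fst \<omega> a = snd \<omega> i \<or> M < scaled_sqdist \<sigma> \<pi> \<omega> a i}
      else {\<omega> \<in> space ?P. scaled_sqdist \<sigma> \<pi> \<omega> a i \<le> M})" for a i
  have M: "M > 0" using L by (simp add: M_def d_def add_pos_nonneg)
  have sets_bad: "bad a i \<in> sets ?P" for a i
  proof -
    have "{\<omega> \<in> space ?P. M < scaled_sqdist \<sigma> \<pi> \<omega> a i} \<in> sets ?P"
      "{\<omega> \<in> space ?P. scaled_sqdist \<sigma> \<pi> \<omega> a i \<le> M} \<in> sets ?P"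
      by measurable
    then show ?thesis
      unfolding bad_def using sets_coincidence by (auto intro!: sets.sets_Collect_disj)
  qed
  have measure_bad: "measure ?P (bad a i) \<le> 2 * exp (- L)" for a i
    using exp_gt_zero[of "- L"] prob_matched_pair_bad[where \<sigma> = \<sigma> and \<theta> = \<theta> and \<pi> = \<pi> and i = i, OF \<sigma> L]
      prob_mismatched_pair_close[where \<sigma> = \<sigma> and \<pi> = \<pi> and i = i and a = a,
        OF \<sigma> L _ sep K1 K2[unfolded d_def]]
    by (cases "a = \<pi> i") (auto simp: bad_def M_def d_def intro: order.trans)
  have "{\<omega> \<in> space ?P. est (\<sigma> \<circ> \<pi>) \<omega> \<noteq> \<pi>} \<subseteq> (\<Union>p. bad (fst p) (snd p))"
  proof (rule subsetI, rule ccontr)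
    fix \<omega> assume \<omega>: "\<omega> \<in> {\<omega> \<in> space ?P. est (\<sigma> \<circ> \<pi>) \<omega> \<noteq> \<pi>}" and "\<omega> \<notin> (\<Union>p. bad (fst p) (snd p))"
    then have good: "\<omega> \<notin> bad a i" for a i by auto
    have "est (\<sigma> \<circ> \<pi>) \<omega> = \<pi>"
    proof (rule estimator_eq_of_separated[OF \<sigma> \<pi> est M])
      fix i
      show "fst \<omega> (\<pi> i) \<noteq> snd \<omega> i" "scaled_sqdist \<sigma> \<pi> \<omega> (\<pi> i) i \<le> M"
        using good[of "\<pi> i" i] \<omega> by (auto simp: bad_def)
      show "M < scaled_sqdist \<sigma> \<pi> \<omega> a i" if "a \<noteq> \<pi> i" for a
        using good[of a i] \<omega> that by (auto simp: bad_def)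
    qed
    then show False using \<omega> by simp
  qed
  \<comment> \<open>No measurability of \<open>est\<close> is needed: \<open>finite_measure_mono\<close> only asks the cover to be
    measurable, and \<open>measure\<close> is 0 on non-measurable sets.\<close>
  then have "measure ?P {\<omega> \<in> space ?P. est (\<sigma> \<circ> \<pi>) \<omega> \<noteq> \<pi>} \<le> (\<Sum>p\<in>UNIV. measure ?P (bad (fst p) (snd p)))"
    by (rule order.trans[OF finite_measure_mono finite_measure_subadditive_finite]) (auto intro: sets_bad)
  also have "\<dots> \<le> (\<Sum>p\<in>(UNIV :: ('n \<times> 'n) set). 2 * exp (- L))"
    by (rule sum_mono) (rule measure_bad)
  also have "\<dots> = 2 * (real CARD('n))\<^sup>2 * exp (- L)"
    by (simp add: UNIV_Times_UNIV[symmetric] card_cartesian_product power2_eq_square del: UNIV_Times_UNIV)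
  finally show ?thesis .
qed

lemma perceivable_sep_le:
  fixes est :: "('n::finite \<Rightarrow> real) \<Rightarrow> ('n, 'd::finite) obs \<Rightarrow> 'n \<Rightarrow> 'n"
  assumes K: "K \<ge> 0"
    and err: "\<And>\<pi> (\<theta> :: 'n \<Rightarrow> 'd \<Rightarrow> real). \<pi> permutes UNIV \<Longrightarrow> K < rel_sep \<theta> \<sigma> \<Longrightarrow>
       measure (data_law \<theta> \<sigma> \<pi>) {\<omega> \<in> space (data_law \<theta> \<sigma> \<pi>). est (\<sigma> \<circ> \<pi>) \<omega> \<noteq> \<pi>} \<le> \<alpha>"
  shows "perceivable_sep \<alpha> \<sigma> est \<le> ereal K"
  unfolding perceivable_sep_def
proof (rule ereal_le_epsilon2)
  fix e :: real assume "e > 0"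
  then have "(INF \<kappa> \<in> {\<kappa>. \<kappa> > 0 \<and> (\<forall>\<pi> (\<theta> :: 'n \<Rightarrow> 'd \<Rightarrow> real). \<pi> permutes UNIV \<longrightarrow> rel_sep \<theta> \<sigma> > \<kappa> \<longrightarrow>
        measure (data_law \<theta> \<sigma> \<pi>) {\<omega> \<in> space (data_law \<theta> \<sigma> \<pi>). est (\<sigma> \<circ> \<pi>) \<omega> \<noteq> \<pi>} \<le> \<alpha>)}. ereal \<kappa>)
      \<le> ereal (K + e)"
    using K err by (intro INF_lower) auto
  then show "(INF \<kappa> \<in> {\<kappa>. \<kappa> > 0 \<and> (\<forall>\<pi> (\<theta> :: 'n \<Rightarrow> 'd \<Rightarrow> real). \<pi> permutes UNIV \<longrightarrow> rel_sep \<theta> \<sigma> > \<kappa> \<longrightarrow>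
        measure (data_law \<theta> \<sigma> \<pi>) {\<omega> \<in> space (data_law \<theta> \<sigma> \<pi>). est (\<sigma> \<circ> \<pi>) \<omega> \<noteq> \<pi>} \<le> \<alpha>)}. ereal \<kappa>)
      \<le> ereal K + ereal e"
    by simp
qed

lemma separation_threshold_conditions:
  fixes n d \<alpha> :: real
  assumes n: "n \<ge> 2" and \<alpha>: "0 < \<alpha>" "\<alpha> < 1" and d: "d \<ge> 0"
  defines "L \<equiv> ln (2 * n\<^sup>2 / \<alpha>)"
    and "K \<equiv> 4 * max (sqrt (2 * ln (8 * n\<^sup>2 / \<alpha>))) ((d * ln (4 * n\<^sup>2 / \<alpha>)) powr (1/4))"
  shows "L > 0" "2 * n\<^sup>2 * exp (- L) \<le> \<alpha>" "4 * sqrt (2 * L) \<le> K" "16 * sqrt (d * L) \<le> K\<^sup>2"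
proof -
  have "n\<^sup>2 \<ge> 2\<^sup>2" using n by (intro power_mono) auto
  then have ratio: "2 * n\<^sup>2 / \<alpha> > 1" using \<alpha> by simp
  then show L: "L > 0" by (simp add: L_def)
  have "exp L = 2 * n\<^sup>2 / \<alpha>"
    using ratio by (simp add: L_def)
  then show "2 * n\<^sup>2 * exp (- L) \<le> \<alpha>"
    using \<alpha> by (simp add: exp_minus)
  have L8: "L \<le> ln (8 * n\<^sup>2 / \<alpha>)" and L4: "L \<le> ln (4 * n\<^sup>2 / \<alpha>)"
    using ratio \<alpha> n unfolding L_def by (subst ln_le_cancel_iff; auto intro!: divide_right_mono)+
  then show "4 * sqrt (2 * L) \<le> K"
    by (simp add: K_def le_max_iff_disj)
  define B where "B = (d * ln (4 * n\<^sup>2 / \<alpha>)) powr (1/4)"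
  have "0 \<le> d * ln (4 * n\<^sup>2 / \<alpha>)" using d L L4 by simp
  then have "B\<^sup>2 = sqrt (d * ln (4 * n\<^sup>2 / \<alpha>))"
    by (simp add: B_def power2_eq_square powr_half_sqrt flip: powr_add)
  then have "16 * sqrt (d * L) \<le> (4 * B)\<^sup>2"
    using L4 d by (simp add: power_mult_distrib mult_left_mono)
  also have "\<dots> \<le> K\<^sup>2"
    by (rule power_mono) (simp_all add: K_def B_def)
  finally show "16 * sqrt (d * L) \<le> K\<^sup>2" .
qed

theorem theorem3:
  fixes \<sigma> :: "'n::finite \<Rightarrow> real" and \<alpha> :: real
    and est :: "('n \<Rightarrow> real) \<Rightarrow> ('n, 'd::finite) obs \<Rightarrow> 'n \<Rightarrow> 'n"
  assumes n2: "CARD('n) \<ge> 2"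
    and alpha: "0 < \<alpha>" "\<alpha> < 1"
    and sigma_pos: "\<And>i. \<sigma> i > 0"
    and "\<And>\<pi>. \<pi> permutes UNIV \<Longrightarrow> est (\<sigma> \<circ> \<pi>) \<in> obs_space \<rightarrow>\<^sub>M count_space UNIV"
    and est: "is_LSNS \<sigma> est \<or> is_LSL \<sigma> est"
  shows "perceivable_sep \<alpha> \<sigma> est
     \<le> ereal (4 * max (sqrt (2 * ln (8 * real (CARD('n))^2 / \<alpha>)))
                        ((real (CARD('d)) * ln (4 * real (CARD('n))^2 / \<alpha>)) powr (1/4)))"
proof -
  define n d where "n = real CARD('n)" and "d = real CARD('d)"
  define L where "L = ln (2 * n\<^sup>2 / \<alpha>)"
  define K where "K = 4 * max (sqrt (2 * ln (8 * n\<^sup>2 / \<alpha>))) ((d * ln (4 * n\<^sup>2 / \<alpha>)) powr (1/4))"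
  have "n \<ge> 2" "d \<ge> 0" using n2 by (simp_all add: n_def d_def)
  note conditions = separation_threshold_conditions[OF this(1) alpha this(2), folded L_def K_def]
  have "perceivable_sep \<alpha> \<sigma> est \<le> ereal K"
  proof (rule perceivable_sep_le)
    show "K \<ge> 0" using conditions(1,3) real_sqrt_ge_zero[of "2 * L"] by linarith
    fix \<pi> :: "'n \<Rightarrow> 'n" and \<theta> :: "'n \<Rightarrow> 'd \<Rightarrow> real"
    assume "\<pi> permutes UNIV" "K < rel_sep \<theta> \<sigma>"
    then have "measure (data_law \<theta> \<sigma> \<pi>) {\<omega> \<in> space (data_law \<theta> \<sigma> \<pi>). est (\<sigma> \<circ> \<pi>) \<omega> \<noteq> \<pi>}
        \<le> 2 * n\<^sup>2 * exp (- L)"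
      using conditions unfolding n_def d_def by (intro error_probability_le[OF sigma_pos _ est])
    also have "\<dots> \<le> \<alpha>" by (rule conditions(2))
    finally show "measure (data_law \<theta> \<sigma> \<pi>) {\<omega> \<in> space (data_law \<theta> \<sigma> \<pi>). est (\<sigma> \<circ> \<pi>) \<omega> \<noteq> \<pi>} \<le> \<alpha>" .
  qed
  then show ?thesis by (simp add: K_def n_def d_def)
qed

end
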